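(* Let $\{s_n\}_{n\ge 0}$ and $\{r_n\}_{n\ge 0}$ be the little and large Schröder numbers, i.e. the sequences satisfying $(n+2)z_{n+1}=3(2n+1)z_n-(n-1)z_{n-1}$ for $n\ge 1$, with initial values $s_0=s_1=1$ and $r_0=1$, $r_1=2$ respectively. Then both $\{s_n\}_{n\ge 0}$ and $\{r_n\}_{n\ge0}$ are log-convex.
   Context: A sequence $a_0,a_1,\ldots$ of nonnegative real numbers is log-convex if $a_{k-1}a_{k+1}\ge a_k^2$ for all $k\ge 1$. *)

theory Defs
  imports Complex_Main
begin

fun schroeder_rec :: "real \<Rightarrow> real \<Rightarrow> nat \<Rightarrow> real" where
  "schroeder_rec a b 0 = a"
| "schroeder_rec a b (Suc 0) = b"
| "schroeder_rec a b (Suc (Suc n)) =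
     (3 * (2 * real (Suc n) + 1) * schroeder_rec a b (Suc n)
      - (real (Suc n) - 1) * schroeder_rec a b n) / (real (Suc n) + 2)"

definition little_schroeder :: "nat \<Rightarrow> real" where
  "little_schroeder = schroeder_rec 1 1"

definition large_schroeder :: "nat \<Rightarrow> real" where
  "large_schroeder = schroeder_rec 1 2"

definition log_convex :: "(nat \<Rightarrow> real) \<Rightarrow> bool" where
  "log_convex a \<longleftrightarrow> (\<forall>k. 0 \<le> a k) \<and> (\<forall>k\<ge>1. a (k - 1) * a (k + 1) \<ge> (a k)^2)"

end

theory Submission
  imports Defs
begin

text \<open>For a positive sequence, log-convexity means that the ratios \<open>r\<^sub>n = z\<^sub>n\<^sub>+\<^sub>1 / z\<^sub>n\<close>
  are nondecreasing. The recurrence gives \<open>r\<^sub>n\<^sub>+\<^sub>1 = \<phi>\<^sub>n(r\<^sub>n)\<close> with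
  \<open>\<phi>\<^sub>n(t) = (3(2n+3) - n/t)/(n+3)\<close>, and \<open>\<phi>\<^sub>n(t)\<close> is nondecreasing in \<open>t > 0\<close> and, for
  \<open>t \<ge> 1/3\<close>, in \<open>n\<close>, because \<open>\<phi>\<^sub>n\<^sub>+\<^sub>1(t) - \<phi>\<^sub>n(t) = (9 - 3/t)/((n+3)(n+4))\<close>. Hence
  \<open>r\<^sub>n \<le> r\<^sub>n\<^sub>+\<^sub>1\<close> implies \<open>r\<^sub>n\<^sub>+\<^sub>1 = \<phi>\<^sub>n(r\<^sub>n) \<le> \<phi>\<^sub>n\<^sub>+\<^sub>1(r\<^sub>n) \<le> \<phi>\<^sub>n\<^sub>+\<^sub>1(r\<^sub>n\<^sub>+\<^sub>1) = r\<^sub>n\<^sub>+\<^sub>2\<close>.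
  The induction starts because \<open>z\<^sub>2 = 3 z\<^sub>1\<close>, so \<open>r\<^sub>0 = z\<^sub>1/z\<^sub>0 \<le> 3 = r\<^sub>1\<close> whenever
  \<open>z\<^sub>0 \<le> z\<^sub>1 \<le> 3 z\<^sub>0\<close>, which covers both Schroeder sequences.\<close>

definition schroeder_ratio_next :: "nat \<Rightarrow> real \<Rightarrow> real" where
  "schroeder_ratio_next n t = (3 * (2 * real n + 3) - real n / t) / (real n + 3)"

lemma schroeder_ratio_next_mono:
  assumes "0 < s" and "s \<le> t"
  shows "schroeder_ratio_next n s \<le> schroeder_ratio_next n t"
proof -
  have "real n / t \<le> real n / s"
    using assms by (intro divide_left_mono) auto
  then show ?thesis
    unfolding schroeder_ratio_next_def by (intro divide_right_mono) auto
qed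

lemma schroeder_ratio_next_le_Suc:
  assumes "1 / 3 \<le> t"
  shows "schroeder_ratio_next n t \<le> schroeder_ratio_next (Suc n) t"
proof -
  have t: "0 < t" using assms by linarith
  have "schroeder_ratio_next (Suc n) t - schroeder_ratio_next n t
      = (9 - 3 / t) / ((real n + 3) * (real n + 4))"
    unfolding schroeder_ratio_next_def
    by (simp add: divide_simps) (simp add: algebra_simps)
  moreover have "3 / t \<le> 9"
    using assms t by (simp add: divide_le_eq)
  then have "0 \<le> (9 - 3 / t) / ((real n + 3) * (real n + 4))"
    by (intro divide_nonneg_pos) auto
  ultimately show ?thesis by linarith
qed

lemma schroeder_rec_ratio:
  assumes "schroeder_rec a b n \<noteq> 0" and "schroeder_rec a b (Suc n) \<noteq> 0"
  shows "schroeder_rec a b (Suc (Suc n)) / schroeder_rec a b (Suc n)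
       = schroeder_ratio_next n (schroeder_rec a b (Suc n) / schroeder_rec a b n)"
  using assms by (simp add: schroeder_ratio_next_def field_simps)

lemma log_convex_if_ratio_incseq:
  fixes z :: "nat \<Rightarrow> real"
  assumes pos: "\<And>k. 0 < z k" and ratio: "incseq (\<lambda>k. z (Suc k) / z k)"
  shows "log_convex z"
  unfolding log_convex_def
proof (intro conjI allI impI)
  fix k :: nat
  show "0 \<le> z k" using pos[of k] by simp
  assume "1 \<le> k"
  then obtain m where k: "k = Suc m" by (cases k) auto
  have "z (Suc m) / z m \<le> z (Suc (Suc m)) / z (Suc m)"
    using incseq_SucD[OF ratio] by simp
  then show "(z k)\<^sup>2 \<le> z (k - 1) * z (k + 1)"
    using pos[of m] pos[of "Suc m"] k
    by (simp add: le_divide_eq divide_le_eq power2_eq_square mult.commute)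
qed

lemma schroeder_rec_pos_ratio_mono:
  fixes a b :: real
  assumes "0 < a" and "a \<le> b" and "b \<le> 3 * a"
  defines "z \<equiv> schroeder_rec a b"
  shows "0 < z n \<and> 1 \<le> z (Suc n) / z n \<and> z (Suc n) / z n \<le> z (Suc (Suc n)) / z (Suc n)"
proof (induction n)
  case 0
  have "z (Suc (Suc 0)) = 3 * b" unfolding z_def by simp
  then show ?case using assms(1-3) unfolding z_def by (simp add: field_simps)
next
  case (Suc n)
  then have pos: "0 < z n" and ratio_ge_1: "1 \<le> z (Suc n) / z n"
    and ratio_le: "z (Suc n) / z n \<le> z (Suc (Suc n)) / z (Suc n)" by auto
  have pos_Suc: "0 < z (Suc n)" using pos ratio_ge_1 by (simp add: le_divide_eq)
  have ratio_Suc_ge_1: "1 \<le> z (Suc (Suc n)) / z (Suc n)"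
    using ratio_ge_1 ratio_le by linarith
  then have pos_Suc_Suc: "0 < z (Suc (Suc n))" using pos_Suc by (simp add: le_divide_eq)
  have "z (Suc (Suc n)) / z (Suc n) = schroeder_ratio_next n (z (Suc n) / z n)"
    unfolding z_def
    by (rule schroeder_rec_ratio) (use pos pos_Suc in \<open>unfold z_def, linarith+\<close>)
  also have "\<dots> \<le> schroeder_ratio_next (Suc n) (z (Suc n) / z n)"
    using ratio_ge_1 by (intro schroeder_ratio_next_le_Suc) linarith
  also have "\<dots> \<le> schroeder_ratio_next (Suc n) (z (Suc (Suc n)) / z (Suc n))"
    using ratio_ge_1 ratio_le by (intro schroeder_ratio_next_mono) simp_all
  also have "\<dots> = z (Suc (Suc (Suc n))) / z (Suc (Suc n))"
    unfolding z_def
    by (rule schroeder_rec_ratio[symmetric])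
      (use pos_Suc pos_Suc_Suc in \<open>unfold z_def, linarith+\<close>)
  finally show ?case using pos_Suc ratio_Suc_ge_1 by blast
qed

lemma log_convex_schroeder_rec:
  assumes "0 < a" and "a \<le> b" and "b \<le> 3 * a"
  shows "log_convex (schroeder_rec a b)"
  using schroeder_rec_pos_ratio_mono[OF assms]
  by (intro log_convex_if_ratio_incseq incseq_SucI) auto

theorem corollary3p13:
  shows "log_convex little_schroeder \<and> log_convex large_schroeder"
  unfolding little_schroeder_def large_schroeder_def
  by (simp add: log_convex_schroeder_rec)

end
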